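(* Consider CAV $i$ subject to both the rear-end constraint with respect to its physically preceding CAV $i_p$ and the safe-merging constraint with respect to CAV $i-1$ on the other road, as in the context, under (A1) and (SA). Let $t=t_i^0+k\Delta t$. Assume $v_i\ge0$ at all times and $u_{\min}\le0$. Suppose that $b_{\eta_1}(t)\ge0$, $b_{\eta_2}(t)\ge0$, that QP$_{12}(t)$ is feasible, and that the control applied on $[t,t+\Delta t)$ is a feasible point of QP$_{12}(t)$. Then QP$_{12}(t+\Delta t)$ is feasible.
   Context: **Vehicle model.** The vehicle dynamics are $\dot x_i=v_i$ and $\dot v_i=u_i$, where $x_i\in[0,L]$ is the distance travelled by CAV $i$ from its road's origin, $v_i$ its speed and $u_i$ its acceleration (the control). The merging point is at position $L>0$. **Other vehicles.** CAV $i_p$ physically precedes $i$ on the same road, with position $x_{i_p}$, speed $v_{i_p}$ and acceleration $u_{i_p}$. CAV $i-1$ immediately precedes $i$ in first-in-first-out crossing order on the other road, with $x_{i-1}$, $v_{i-1}$ and $u_{i-1}$. All of these quantities are known to CAV $i$. **Constants and control bounds.** Let $z_{i,i_p}=x_{i_p}-x_i$ and $z_{i,i-1}=x_{i-1}-x_i$. The constants are $\varphi>0$, $\delta$, $k_1>0$, $k_2>0$, and $\varphi_2=\varphi/L$. Control bounds are $u_{\min}\le u_i\le u_{i,\max}$ with $u_{\min}<0<u_{i,\max}$. **(A1) Common minimum acceleration.** All CAVs share the minimum acceleration $u_{\min}$, so $u_{i_p}\ge u_{\min}$ and $u_{i-1}\ge u_{\min}$ at all times. **Rear-end functions:** - $b_1=z_{i,i_p}-\varphi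 v_i-\delta$. - $b_{\mathrm{cbf}_1}(u_i)=v_{i_p}-v_i-\varphi u_i+k_1b_1$. - $b_{F,1}=v_{i_p}-v_i+k_1b_1-\varphi u_{\min}$. - $b_{\eta_1}=v_{i_p}-v_i-\varphi u_{\min}$. - $\eta_1(u_i)=u_{i_p}-u_i+k_1b_{\eta_1}$. **Merging functions:** - $b_2=z_{i,i-1}-\varphi_2x_iv_i-\delta$. - $b_{\mathrm{cbf}_2}(u_i)=v_{i-1}-v_i-\varphi_2v_i^2-\varphi_2x_iu_i+k_2b_2$. - $b_{F,2}=v_{i-1}-v_i-\varphi_2v_i^2+k_2b_2-\varphi_2x_iu_{\min}$. - $b_{\eta_2}=v_{i-1}-v_i-\varphi_2v_i^2-\varphi_2x_iu_{\min}$. - $\eta_2(u_i)=u_{i-1}-u_i-2\varphi_2v_iu_i-\varphi_2v_iu_{\min}+k_2b_{\eta_2}$. Note that $\eta_j=\dot b_{\eta_j}+k_jb_{\eta_j}$ and $\dot b_{F,j}+k_jb_{F,j}=\eta_j+k_jb_{\mathrm{cbf}_j}$ for $j=1,2$. **QP$_{12}(t)$.** QP$_{12}(t)$ minimizes $\beta e_i^2+\tfrac12(u_i-u_{\mathrm{ref}}(t))^2$ over $(u_i,e_i)$ subject to: - $b_{\mathrm{cbf}_1}\ge0$ and $b_{\mathrm{cbf}_2}\ge0$, - $u_{\min}\le u_i\le u_{i,\max}$, - $\eta_1\ge0$ and $\eta_2\ge0$, - a control Lyapunov constraint $c_1(t)+c_2(t)u_i\le e_i$ with free slack variable $e_i$.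 All quantities are evaluated at $t$. "Feasible" means the constraint set is nonempty. **(SA) Sampling / forward invariance.** The control is held constant on each $[t,t+\Delta t)$, and $\Delta t$ is small enough that for $b\in\{b_1,b_{F,1},b_{\eta_1}\}$ with gain $k=k_1$, and for $b\in\{b_2,b_{F,2},b_{\eta_2}\}$ with gain $k=k_2$: if $b(t)\ge0$ and $\dot b(t)+kb(t)\ge0$ under the applied controls, then $b(t+\Delta t)\ge0$. *)

theory Defs
  imports Complex_Main
begin

text \<open>State variables: xi, vi (ego CAV i), xp, vp, up (physically preceding CAV i_p),
  xm, vm, um (CAV i-1, FIFO predecessor on the other road). phi2 = phi / L.\<close>

definition b1 :: "real \<Rightarrow> real \<Rightarrow> real \<Rightarrow> real \<Rightarrow> real \<Rightarrow> real" where
  "b1 phi delta xi vi xp = (xp - xi) - phi * vi - delta"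

definition bcbf1 :: "real \<Rightarrow> real \<Rightarrow> real \<Rightarrow> real \<Rightarrow> real \<Rightarrow> real \<Rightarrow> real \<Rightarrow> real \<Rightarrow> real" where
  "bcbf1 phi delta k1 xi vi xp vp u = vp - vi - phi * u + k1 * b1 phi delta xi vi xp"

definition bF1 :: "real \<Rightarrow> real \<Rightarrow> real \<Rightarrow> real \<Rightarrow> real \<Rightarrow> real \<Rightarrow> real \<Rightarrow> real \<Rightarrow> real" where
  "bF1 phi delta k1 umin xi vi xp vp = vp - vi + k1 * b1 phi delta xi vi xp - phi * umin"

definition beta1 :: "real \<Rightarrow> real \<Rightarrow> real \<Rightarrow> real \<Rightarrow> real" where
  "beta1 phi umin vi vp = vp - vi - phi * umin"

definition eta1 :: "real \<Rightarrow> real \<Rightarrow> real \<Rightarrow> real \<Rightarrow> real \<Rightarrow> real \<Rightarrow> real \<Rightarrow> real" where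
  "eta1 phi k1 umin vi vp up u = up - u + k1 * beta1 phi umin vi vp"

definition b2 :: "real \<Rightarrow> real \<Rightarrow> real \<Rightarrow> real \<Rightarrow> real \<Rightarrow> real \<Rightarrow> real" where
  "b2 phi delta L xi vi xm = (xm - xi) - (phi / L) * xi * vi - delta"

definition bcbf2 :: "real \<Rightarrow> real \<Rightarrow> real \<Rightarrow> real \<Rightarrow> real \<Rightarrow> real \<Rightarrow> real \<Rightarrow> real \<Rightarrow> real \<Rightarrow> real" where
  "bcbf2 phi delta k2 L xi vi xm vm u =
     vm - vi - (phi / L) * vi ^ 2 - (phi / L) * xi * u + k2 * b2 phi delta L xi vi xm"

definition bF2 :: "real \<Rightarrow> real \<Rightarrow> real \<Rightarrow> real \<Rightarrow> real \<Rightarrow> real \<Rightarrow> real \<Rightarrow> real \<Rightarrow> real \<Rightarrow> real" where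
  "bF2 phi delta k2 L umin xi vi xm vm =
     vm - vi - (phi / L) * vi ^ 2 + k2 * b2 phi delta L xi vi xm - (phi / L) * xi * umin"

definition beta2 :: "real \<Rightarrow> real \<Rightarrow> real \<Rightarrow> real \<Rightarrow> real \<Rightarrow> real \<Rightarrow> real" where
  "beta2 phi L umin xi vi vm = vm - vi - (phi / L) * vi ^ 2 - (phi / L) * xi * umin"

definition eta2 :: "real \<Rightarrow> real \<Rightarrow> real \<Rightarrow> real \<Rightarrow> real \<Rightarrow> real \<Rightarrow> real \<Rightarrow> real \<Rightarrow> real \<Rightarrow> real" where
  "eta2 phi k2 L umin xi vi vm um u =
     um - u - 2 * (phi / L) * vi * u - (phi / L) * vi * umin + k2 * beta2 phi L umin xi vi vm"

text \<open>Constraints of QP12 at a time instant, for the decision variables (u, e), given the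
  current values of all state quantities and of c1, c2. The objective (beta, u_ref) plays no
  role in feasibility.\<close>

definition QP12_constraints ::
  "real \<Rightarrow> real \<Rightarrow> real \<Rightarrow> real \<Rightarrow> real \<Rightarrow> real \<Rightarrow> real \<Rightarrow>
   real \<Rightarrow> real \<Rightarrow> real \<Rightarrow> real \<Rightarrow> real \<Rightarrow> real \<Rightarrow> real \<Rightarrow> real \<Rightarrow>
   real \<Rightarrow> real \<Rightarrow> real \<Rightarrow> real \<Rightarrow> bool" where
  "QP12_constraints phi delta k1 k2 L umin umax xi vi xp vp up xm vm um c1 c2 u e \<longleftrightarrow>
     bcbf1 phi delta k1 xi vi xp vp u \<ge> 0 \<and>
     bcbf2 phi delta k2 L xi vi xm vm u \<ge> 0 \<and>
     umin \<le> u \<and> u \<le> umax \<and>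
     eta1 phi k1 umin vi vp up u \<ge> 0 \<and>
     eta2 phi k2 L umin xi vi vm um u \<ge> 0 \<and>
     c1 + c2 * u \<le> e"

definition QP12_feasible ::
  "real \<Rightarrow> real \<Rightarrow> real \<Rightarrow> real \<Rightarrow> real \<Rightarrow> real \<Rightarrow> real \<Rightarrow>
   real \<Rightarrow> real \<Rightarrow> real \<Rightarrow> real \<Rightarrow> real \<Rightarrow> real \<Rightarrow> real \<Rightarrow> real \<Rightarrow>
   real \<Rightarrow> real \<Rightarrow> bool" where
  "QP12_feasible phi delta k1 k2 L umin umax xi vi xp vp up xm vm um c1 c2 \<longleftrightarrow>
     (\<exists>u e. QP12_constraints phi delta k1 k2 L umin umax xi vi xp vp up xm vm um c1 c2 u e)"

text \<open>If B(t) \<ge> 0 and dB/dt(t) + K B(t) \<ge> 0 (right derivative at t, i.e. under the control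
  applied on [t, t + dt)), then B(t + dt) \<ge> 0.\<close>

definition SA_holds :: "(real \<Rightarrow> real) \<Rightarrow> real \<Rightarrow> real \<Rightarrow> real \<Rightarrow> bool" where
  "SA_holds B K t dt \<longleftrightarrow>
     (\<forall>d. (B has_real_derivative d) (at t within {t..}) \<longrightarrow>
          B t \<ge> 0 \<longrightarrow> d + K * B t \<ge> 0 \<longrightarrow> B (t + dt) \<ge> 0)"

end

theory Submission
  imports Defs
begin

text \<open>Along the trajectory, \<open>eta_j = beta_j' + k_j beta_j\<close> and
  \<open>bF_j' + k_j bF_j = eta_j + k_j bcbf_j\<close>, so the constraints \<open>eta_j \<ge> 0\<close> and
  \<open>bcbf_j \<ge> 0\<close> met by the applied control are exactly the hypotheses of (SA): hence
  \<open>beta_j\<close> and \<open>bF_j\<close> are still nonnegative at \<open>t + dt\<close> (at \<open>t\<close> itself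
  \<open>bF_j \<ge> bcbf_j(u) \<ge> 0\<close> because \<open>u \<ge> umin\<close>). At \<open>t + dt\<close> the control
  \<open>umin\<close> is then feasible: it turns \<open>bcbf_j\<close> into \<open>bF_j\<close>, and (A1) together with
  \<open>v \<ge> 0 \<ge> umin\<close> gives \<open>eta_j(umin) \<ge> k_j beta_j \<ge> 0\<close>.\<close>

lemma SA_holds_nonneg:
  assumes "SA_holds B K t dt"
    and "(B has_real_derivative D - K * B t) (at t within {t..})"
    and "B t \<ge> 0" and "D \<ge> 0"
  shows "B (t + dt) \<ge> 0"
  using assms unfolding SA_holds_def by fastforce

lemma bF1_eq_bcbf1:
  "bF1 phi delta k1 umin xi vi xp vp = bcbf1 phi delta k1 xi vi xp vp u + phi * (u - umin)"
  unfolding bF1_def bcbf1_def by (simp add: algebra_simps)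

lemma bF2_eq_bcbf2:
  "bF2 phi delta k2 L umin xi vi xm vm = bcbf2 phi delta k2 L xi vi xm vm u + (phi / L) * xi * (u - umin)"
  unfolding bF2_def bcbf2_def by (simp add: right_diff_distrib)

lemma bF1_nonneg:
  assumes "bcbf1 phi delta k1 xi vi xp vp u \<ge> 0" "umin \<le> u" "phi \<ge> 0"
  shows "bF1 phi delta k1 umin xi vi xp vp \<ge> 0"
  using assms by (simp add: bF1_eq_bcbf1[where u = u])

lemma bF2_nonneg:
  assumes "bcbf2 phi delta k2 L xi vi xm vm u \<ge> 0" "umin \<le> u" "phi / L \<ge> 0" "xi \<ge> 0"
  shows "bF2 phi delta k2 L umin xi vi xm vm \<ge> 0"
proof -
  have "(phi / L) * xi * (u - umin) \<ge> 0"
    using assms(2-4) by (intro mult_nonneg_nonneg) auto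
  then show ?thesis
    unfolding bF2_eq_bcbf2[where u = u] using assms(1) by linarith
qed

lemma beta1_has_derivative:
  assumes "(v has_real_derivative a) (at s within S)" "(vp has_real_derivative ap) (at s within S)"
  shows "((\<lambda>s. beta1 phi umin (v s) (vp s)) has_real_derivative
            eta1 phi k1 umin (v s) (vp s) ap a - k1 * beta1 phi umin (v s) (vp s)) (at s within S)"
  unfolding beta1_def eta1_def
  by (auto intro!: derivative_eq_intros assms simp: algebra_simps)

lemma bF1_has_derivative:
  assumes "(x has_real_derivative v s) (at s within S)" "(v has_real_derivative a) (at s within S)"
    and "(xp has_real_derivative vp s) (at s within S)" "(vp has_real_derivative ap) (at s within S)"
  shows "((\<lambda>s. bF1 phi delta k1 umin (x s) (v s) (xp s) (vp s)) has_real_derivative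
            eta1 phi k1 umin (v s) (vp s) ap a + k1 * bcbf1 phi delta k1 (x s) (v s) (xp s) (vp s) a
            - k1 * bF1 phi delta k1 umin (x s) (v s) (xp s) (vp s)) (at s within S)"
  unfolding bF1_def eta1_def bcbf1_def beta1_def b1_def
  by (auto intro!: derivative_eq_intros assms simp: algebra_simps)

lemma beta2_has_derivative:
  assumes "L \<noteq> 0"
    and "(x has_real_derivative v s) (at s within S)" "(v has_real_derivative a) (at s within S)"
    and "(vm has_real_derivative am) (at s within S)"
  shows "((\<lambda>s. beta2 phi L umin (x s) (v s) (vm s)) has_real_derivative
            eta2 phi k2 L umin (x s) (v s) (vm s) am a - k2 * beta2 phi L umin (x s) (v s) (vm s))
         (at s within S)"
  unfolding beta2_def eta2_def
  by (auto intro!: derivative_eq_intros assms simp: field_simps power2_eq_square)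

lemma bF2_has_derivative:
  assumes "L \<noteq> 0"
    and "(x has_real_derivative v s) (at s within S)" "(v has_real_derivative a) (at s within S)"
    and "(xm has_real_derivative vm s) (at s within S)" "(vm has_real_derivative am) (at s within S)"
  shows "((\<lambda>s. bF2 phi delta k2 L umin (x s) (v s) (xm s) (vm s)) has_real_derivative
            eta2 phi k2 L umin (x s) (v s) (vm s) am a
            + k2 * bcbf2 phi delta k2 L (x s) (v s) (xm s) (vm s) a
            - k2 * bF2 phi delta k2 L umin (x s) (v s) (xm s) (vm s)) (at s within S)"
  unfolding bF2_def eta2_def bcbf2_def beta2_def b2_def
  by (auto intro!: derivative_eq_intros assms simp: field_simps power2_eq_square)

lemma QP12_constraints_umin:
  assumes "bF1 phi delta k1 umin xi vi xp vp \<ge> 0" "beta1 phi umin vi vp \<ge> 0"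
    and "bF2 phi delta k2 L umin xi vi xm vm \<ge> 0" "beta2 phi L umin xi vi vm \<ge> 0"
    and "up \<ge> umin" "um \<ge> umin" "k1 \<ge> 0" "k2 \<ge> 0"
    and "phi / L \<ge> 0" "vi \<ge> 0" "umin \<le> 0" "umin \<le> umax"
  shows "QP12_constraints phi delta k1 k2 L umin umax xi vi xp vp up xm vm um c1 c2
           umin (c1 + c2 * umin)"
proof -
  have "(phi / L) * vi * umin \<le> 0"
    using assms(9-11) by (intro mult_nonneg_nonpos mult_nonneg_nonneg) auto
  moreover have "eta2 phi k2 L umin xi vi vm um umin
      = (um - umin) - 3 * ((phi / L) * vi * umin) + k2 * beta2 phi L umin xi vi vm"
    unfolding eta2_def by (simp add: algebra_simps)
  ultimately have "eta2 phi k2 L umin xi vi vm um umin \<ge> 0"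
    using assms(4,6,8) by simp
  moreover have "eta1 phi k1 umin vi vp up umin \<ge> 0"
    using assms(2,5,7) unfolding eta1_def by simp
  ultimately show ?thesis
    using assms(1,3,12) unfolding QP12_constraints_def
    by (simp add: bF1_eq_bcbf1[where u = umin] bF2_eq_bcbf2[where u = umin])
qed

theorem theorem5:
  fixes x v u xp vp up xm vm um c1 c2 :: "real \<Rightarrow> real"
    and phi delta k1 k2 L umin umax t0 dt t :: real
    and k :: nat
  assumes phi: "phi > 0" and k1: "k1 > 0" and k2: "k2 > 0" and L: "L > 0"
    and ubounds: "umin < 0" "0 < umax" and umin_nonpos: "umin \<le> 0"
    and dt: "dt > 0"
    and t_def: "t = t0 + real k * dt"
    \<comment> \<open>dynamics (right derivatives, since controls are piecewise constant)\<close>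
    and dyn_i: "\<And>s. s \<ge> t0 \<Longrightarrow> (x has_real_derivative v s) (at s within {s..})"
               "\<And>s. s \<ge> t0 \<Longrightarrow> (v has_real_derivative u s) (at s within {s..})"
    and dyn_p: "\<And>s. s \<ge> t0 \<Longrightarrow> (xp has_real_derivative vp s) (at s within {s..})"
               "\<And>s. s \<ge> t0 \<Longrightarrow> (vp has_real_derivative up s) (at s within {s..})"
    and dyn_m: "\<And>s. s \<ge> t0 \<Longrightarrow> (xm has_real_derivative vm s) (at s within {s..})"
               "\<And>s. s \<ge> t0 \<Longrightarrow> (vm has_real_derivative um s) (at s within {s..})"
    and x_range: "\<And>s. s \<ge> t0 \<Longrightarrow> 0 \<le> x s \<and> x s \<le> L"
    and v_nonneg: "\<And>s. s \<ge> t0 \<Longrightarrow> v s \<ge> 0"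
    \<comment> \<open>(A1)\<close>
    and A1: "\<And>s. s \<ge> t0 \<Longrightarrow> up s \<ge> umin" "\<And>s. s \<ge> t0 \<Longrightarrow> um s \<ge> umin"
    \<comment> \<open>control held constant on [t, t + dt)\<close>
    and hold: "\<And>s. t \<le> s \<Longrightarrow> s < t + dt \<Longrightarrow> u s = u t"
    \<comment> \<open>(SA)\<close>
    and SA1: "SA_holds (\<lambda>s. b1 phi delta (x s) (v s) (xp s)) k1 t dt"
    and SA2: "SA_holds (\<lambda>s. bF1 phi delta k1 umin (x s) (v s) (xp s) (vp s)) k1 t dt"
    and SA3: "SA_holds (\<lambda>s. beta1 phi umin (v s) (vp s)) k1 t dt"
    and SA4: "SA_holds (\<lambda>s. b2 phi delta L (x s) (v s) (xm s)) k2 t dt"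
    and SA5: "SA_holds (\<lambda>s. bF2 phi delta k2 L umin (x s) (v s) (xm s) (vm s)) k2 t dt"
    and SA6: "SA_holds (\<lambda>s. beta2 phi L umin (x s) (v s) (vm s)) k2 t dt"
    \<comment> \<open>hypotheses at time t\<close>
    and beta1_t: "beta1 phi umin (v t) (vp t) \<ge> 0"
    and beta2_t: "beta2 phi L umin (x t) (v t) (vm t) \<ge> 0"
    and feas_t: "QP12_feasible phi delta k1 k2 L umin umax
                   (x t) (v t) (xp t) (vp t) (up t) (xm t) (vm t) (um t) (c1 t) (c2 t)"
    and applied: "\<exists>e. QP12_constraints phi delta k1 k2 L umin umax
                   (x t) (v t) (xp t) (vp t) (up t) (xm t) (vm t) (um t) (c1 t) (c2 t) (u t) e"
  shows "QP12_feasible phi delta k1 k2 L umin umax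
           (x (t + dt)) (v (t + dt)) (xp (t + dt)) (vp (t + dt)) (up (t + dt))
           (xm (t + dt)) (vm (t + dt)) (um (t + dt)) (c1 (t + dt)) (c2 (t + dt))"
proof -
  have t: "t \<ge> t0" and t_dt: "t + dt \<ge> t0" using t_def dt by simp_all
  have L_ne: "L \<noteq> 0" and pL: "phi / L \<ge> 0" using phi L by simp_all
  note derivs = dyn_i[OF t] dyn_p[OF t] dyn_m[OF t]
  have cbf1: "bcbf1 phi delta k1 (x t) (v t) (xp t) (vp t) (u t) \<ge> 0"
   and cbf2: "bcbf2 phi delta k2 L (x t) (v t) (xm t) (vm t) (u t) \<ge> 0"
   and u_ge: "umin \<le> u t"
   and eta1: "eta1 phi k1 umin (v t) (vp t) (up t) (u t) \<ge> 0"
   and eta2: "eta2 phi k2 L umin (x t) (v t) (vm t) (um t) (u t) \<ge> 0"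
    using applied unfolding QP12_constraints_def by auto
  have "beta1 phi umin (v (t + dt)) (vp (t + dt)) \<ge> 0"
    by (rule SA_holds_nonneg[OF SA3 beta1_has_derivative beta1_t eta1]) (use derivs in auto)
  moreover have "bF1 phi delta k1 umin (x (t + dt)) (v (t + dt)) (xp (t + dt)) (vp (t + dt)) \<ge> 0"
    by (rule SA_holds_nonneg[OF SA2 bF1_has_derivative bF1_nonneg[OF cbf1 u_ge]])
       (use derivs phi k1 eta1 cbf1 in auto)
  moreover have "beta2 phi L umin (x (t + dt)) (v (t + dt)) (vm (t + dt)) \<ge> 0"
    by (rule SA_holds_nonneg[OF SA6 beta2_has_derivative[OF L_ne] beta2_t eta2]) (use derivs in auto)
  moreover have "bF2 phi delta k2 L umin (x (t + dt)) (v (t + dt)) (xm (t + dt)) (vm (t + dt)) \<ge> 0"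
    by (rule SA_holds_nonneg[OF SA5 bF2_has_derivative[OF L_ne] bF2_nonneg[OF cbf2 u_ge pL]])
       (use derivs x_range[OF t] k2 eta2 cbf2 in auto)
  ultimately have "QP12_constraints phi delta k1 k2 L umin umax
           (x (t + dt)) (v (t + dt)) (xp (t + dt)) (vp (t + dt)) (up (t + dt))
           (xm (t + dt)) (vm (t + dt)) (um (t + dt)) (c1 (t + dt)) (c2 (t + dt))
           umin (c1 (t + dt) + c2 (t + dt) * umin)"
    using A1[OF t_dt] k1 k2 pL v_nonneg[OF t_dt] umin_nonpos ubounds
    by (intro QP12_constraints_umin) auto
  then show ?thesis
    unfolding QP12_feasible_def by blast
qed

end
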